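(* Let $a\ge2$, $d\ge1$, $h\ge1$ and $s$ be integers with $\gcd(a,d)=1$ and $1\le s<a$. Let $\mathit{NR}$ be the set of positive integers not representable as $ax_0+\sum_{i=1}^s(ha+id)x_i$ with $x_0,\dots,x_s$ nonnegative integers, and let $S_m=\sum_{n\in\mathit{NR}}n^m$. Then for every integer $m\ge1$, \[ mS_{m-1}=a^{m-1}\sum_{n=0}^{a-1}B_m\!\left(h\lceil n/s\rceil+\frac{nd}{a}\right)-B_m, \] and, as an identity of functions (equivalently of power series about $z=0$), \[ \sum_{m=0}^\infty S_m\frac{z^m}{m!}=\frac{e^{(h\lceil\frac{a-1}{s}\rceil+d)az}-1}{(e^{dz}-1)(e^{az}-1)}+\frac{(e^{ahz}-1)\bigl(e^{\lceil\frac{a-1}{s}\rceil(ha+sd)z}-1\bigr)}{(e^{az}-1)(e^{(ha+sd)z}-1)(e^{-dz}-1)}-\frac{1}{e^z-1}. \]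
   Context: $B_m(x)$ denotes the Bernoulli polynomials, defined by $\frac{te^{tx}}{e^t-1}=\sum_{m\ge0}B_m(x)\frac{t^m}{m!}$, and $B_m=B_m(0)$. $\lceil x\rceil$ is the least integer not less than $x$. *)

theory Defs
  imports "HOL-Analysis.Analysis" "HOL-Computational_Algebra.Formal_Power_Series"
begin

text \<open>Exponential generating function of the Bernoulli polynomials:
  the unique formal power series F with F * (e^t - 1) = t * e^(t x),
  i.e. F = t e^(t x) / (e^t - 1).\<close>
definition bernoulli_gf :: "real \<Rightarrow> real fps" where
  "bernoulli_gf x = (THE F. F * (fps_exp 1 - 1) = fps_X * fps_exp x)"

definition bernpoly :: "nat \<Rightarrow> real \<Rightarrow> real" where
  "bernpoly m x = fact m * fps_nth (bernoulli_gf x) m"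

definition bernoulli :: "nat \<Rightarrow> real" where
  "bernoulli m = bernpoly m 0"

end

theory Submission
  imports Defs
begin

text \<open>
  Let T be the semigroup generated by a and the h a + i d, 1 \<le> i \<le> s. For n < a the number
  w(n) = h a \<lceil>n/s\<rceil> + n d is the least element of T congruent to n d modulo a: it lies in T, and an
  element a x_0 + \<Sum> x_i (h a + i d) of T with X = \<Sum> x_i and Y = \<Sum> i x_i \<le> s X dominates
  w(Y mod a). As gcd(a, d) = 1, these w(n) represent all residues, so the gaps of T are the numbers
  (n d mod a) + a j with j < w(n) div a. Along each such arithmetic progression m x^(m-1) telescopes
  by B_m(x+1) - B_m(x) = m x^(m-1), and the multiplication formula a^(m-1) \<Sum>_{r<a} B_m(r/a) = B_m
  disposes of the starting points. The generating function comes from geometric series along the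
  same progressions, \<Sum>_{n<a} e^{w(n) z} being summed by parts over the blocks of s consecutive n
  that share the same \<lceil>n/s\<rceil>.
\<close>

lemma fps_exp_minus_1_nonzero:
  assumes "c \<noteq> 0"
  shows "fps_exp c - 1 \<noteq> (0 :: 'a :: field_char_0 fps)"
proof
  assume "fps_exp c - 1 = 0"
  then have "fps_nth (fps_exp c - 1) 1 = fps_nth (0 :: 'a fps) 1"
    by simp
  with assms show False
    by simp
qed

lemma bernoulli_gf_eq: "bernoulli_gf x * (fps_exp 1 - 1) = fps_X * fps_exp x"
proof -
  define D :: "real fps" where "D = Abs_fps (\<lambda>n. 1 / fact (Suc n))"
  have exp_minus_1: "fps_exp 1 - 1 = fps_X * D"
    by (rule fps_ext) (simp add: D_def fps_X_mult_nth fact_reduce)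
  have "fps_nth D 0 \<noteq> 0"
    by (simp add: D_def)
  then have "D * inverse D = 1"
    by (rule inverse_mult_eq_1')
  moreover have "(fps_exp x * inverse D) * (fps_X * D) = (fps_X * fps_exp x) * (D * inverse D)"
    by (simp only: ac_simps)
  ultimately have sol: "(fps_exp x * inverse D) * (fps_exp 1 - 1) = fps_X * fps_exp x"
    by (simp only: exp_minus_1 mult_1_right)
  have "F = fps_exp x * inverse D" if "F * (fps_exp 1 - 1) = fps_X * fps_exp x" for F
  proof -
    have "F * (fps_exp 1 - 1) = (fps_exp x * inverse D) * (fps_exp 1 - 1)"
      by (simp only: that sol)
    then show ?thesis
      using fps_exp_minus_1_nonzero[of "1::real"] by (simp only: mult_cancel_right simp_thms)
  qed
  with sol have "\<exists>!F. F * (fps_exp 1 - 1) = fps_X * fps_exp x"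
    by (intro ex1I)
  then show ?thesis
    unfolding bernoulli_gf_def by (rule theI')
qed

lemma bernoulli_gf_shift: "bernoulli_gf (x + 1) - bernoulli_gf x = fps_X * fps_exp x"
proof -
  have "(bernoulli_gf (x + 1) - bernoulli_gf x) * (fps_exp 1 - 1)
      = fps_X * fps_exp (x + 1) - fps_X * fps_exp x"
    by (simp only: left_diff_distrib bernoulli_gf_eq)
  also have "\<dots> = (fps_X * fps_exp x) * (fps_exp 1 - 1)"
    by (simp add: fps_exp_add_mult algebra_simps)
  finally have "(bernoulli_gf (x + 1) - bernoulli_gf x) * (fps_exp 1 - 1)
      = (fps_X * fps_exp x) * (fps_exp 1 - 1)" .
  then show ?thesis
    using fps_exp_minus_1_nonzero[of "1::real"] by simp
qed

lemma bernpoly_Suc_shift: "bernpoly (Suc m) (x + 1) - bernpoly (Suc m) x = real (Suc m) * x ^ m"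
proof -
  have "bernpoly (Suc m) (x + 1) - bernpoly (Suc m) x
      = fact (Suc m) * fps_nth (bernoulli_gf (x + 1) - bernoulli_gf x) (Suc m)"
    by (simp add: bernpoly_def right_diff_distrib)
  also have "\<dots> = real (Suc m) * x ^ m"
    by (simp add: bernoulli_gf_shift)
  finally show ?thesis .
qed

lemma sum_power_eq_bernpoly:
  "real (Suc m) * (\<Sum>j<q. (x + real j) ^ m) = bernpoly (Suc m) (x + real q) - bernpoly (Suc m) x"
proof -
  have step: "real (Suc m) * (x + real j) ^ m
      = bernpoly (Suc m) (x + real (Suc j)) - bernpoly (Suc m) (x + real j)" for j
  proof -
    have "x + real (Suc j) = (x + real j) + 1"
      by simp
    then show ?thesis
      by (simp only: bernpoly_Suc_shift)
  qed
  have "real (Suc m) * (\<Sum>j<q. (x + real j) ^ m)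
      = (\<Sum>j<q. bernpoly (Suc m) (x + real (Suc j)) - bernpoly (Suc m) (x + real j))"
    by (simp only: sum_distrib_left step)
  also have "\<dots> = bernpoly (Suc m) (x + real q) - bernpoly (Suc m) x"
    by (subst sum_lessThan_telescope) simp
  finally show ?thesis .
qed

lemma bernoulli_gf_multiplication:
  assumes "a > 0"
  shows "(\<Sum>r<a. bernoulli_gf (real r / real a))
    = fps_const (real a) * (bernoulli_gf 0 oo (fps_const (1 / real a) * fps_X))"
    (is "?F = fps_const (real a) * ?G")
proof -
  define E where "E = fps_exp (1 / real a) - 1"
  have "E \<noteq> 0"
    unfolding E_def using assms by (intro fps_exp_minus_1_nonzero) simp
  have step: "fps_exp (real r / real a) * E
      = fps_exp (real (Suc r) / real a) - fps_exp (real r / real a)" for r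
  proof -
    have "real (Suc r) / real a = real r / real a + 1 / real a"
      by (simp add: add_divide_distrib)
    then show ?thesis
      by (simp add: E_def right_diff_distrib fps_exp_add_mult)
  qed
  have "(\<Sum>r<a. fps_exp (real r / real a)) * E
      = (\<Sum>r<a. fps_exp (real (Suc r) / real a) - fps_exp (real r / real a))"
    by (simp only: sum_distrib_right step)
  also have "\<dots> = fps_exp 1 - 1"
    using assms by (subst sum_lessThan_telescope) simp
  finally have geometric: "(\<Sum>r<a. fps_exp (real r / real a)) * E = fps_exp 1 - 1" .
  have "(?F * E) * (fps_exp 1 - 1) = (?F * (fps_exp 1 - 1)) * E"
    by (simp only: ac_simps)
  also have "\<dots> = fps_X * ((\<Sum>r<a. fps_exp (real r / real a)) * E)"
    by (simp only: sum_distrib_right sum_distrib_left bernoulli_gf_eq mult.assoc)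
  also have "\<dots> = fps_X * (fps_exp 1 - 1)"
    by (simp only: geometric)
  finally have "?F * E = fps_X"
    using fps_exp_minus_1_nonzero[of "1::real"] by simp
  moreover have "?G * E = fps_const (1 / real a) * fps_X"
    using arg_cong[where f = "\<lambda>F. F oo (fps_const (1 / real a) * fps_X)", OF bernoulli_gf_eq[of 0]]
    by (simp add: E_def fps_compose_mult_distrib fps_compose_sub_distrib)
  then have "(fps_const (real a) * ?G) * E = fps_X"
    using assms by (simp add: mult.assoc flip: fps_const_mult)
  ultimately have "?F * E = (fps_const (real a) * ?G) * E"
    by (simp only:)
  with \<open>E \<noteq> 0\<close> show ?thesis
    by simp
qed

lemma bernpoly_multiplication:
  assumes "a > 0"
  shows "real a ^ m * (\<Sum>r<a. bernpoly m (real r / real a)) = real a * bernoulli m"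
proof -
  have "(\<Sum>r<a. bernpoly m (real r / real a)) = fact m * fps_nth (\<Sum>r<a. bernoulli_gf (real r / real a)) m"
    by (simp add: bernpoly_def sum_distrib_left fps_sum_nth)
  also have "\<dots> = real a * (1 / real a) ^ m * bernoulli m"
    using assms by (simp add: bernoulli_gf_multiplication bernoulli_def bernpoly_def)
  finally show ?thesis
    using assms by (simp add: power_one_over)
qed

definition ceil_div :: "nat \<Rightarrow> nat \<Rightarrow> nat" where
  "ceil_div n s = (n + s - 1) div s"

lemma ceil_div_bounds:
  assumes "0 < s"
  shows "n \<le> s * ceil_div n s" and "s * ceil_div n s < n + s"
proof -
  have "s * ceil_div n s + (n + s - 1) mod s = n + s - 1"
    unfolding ceil_div_def by (simp add: mult.commute)
  moreover have "(n + s - 1) mod s < s"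
    using assms by simp
  ultimately show "n \<le> s * ceil_div n s" and "s * ceil_div n s < n + s"
    using assms by linarith+
qed

lemma ceil_div_unique:
  assumes "0 < s" "n \<le> s * c" "s * c < n + s"
  shows "ceil_div n s = c"
proof -
  have "s * ceil_div n s < s * (c + 1)"
    using ceil_div_bounds(2)[OF assms(1), of n] assms(2) by simp
  then have "ceil_div n s < c + 1"
    by (rule mult_less_cancel1[THEN iffD1, THEN conjunct2])
  moreover have "s * c < s * (ceil_div n s + 1)"
    using ceil_div_bounds(1)[OF assms(1), of n] assms(3) by simp
  then have "c < ceil_div n s + 1"
    by (rule mult_less_cancel1[THEN iffD1, THEN conjunct2])
  ultimately show ?thesis
    by linarith
qed

lemma ceil_div_le_iff:
  assumes "0 < s"
  shows "ceil_div n s \<le> c \<longleftrightarrow> n \<le> s * c"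
proof
  assume "ceil_div n s \<le> c"
  then show "n \<le> s * c"
    using ceil_div_bounds(1)[OF assms, of n] by (meson le_trans mult_le_mono2)
next
  assume "n \<le> s * c"
  then have "s * ceil_div n s < s * (c + 1)"
    using ceil_div_bounds(2)[OF assms, of n] by simp
  then have "ceil_div n s < c + 1"
    by (rule mult_less_cancel1[THEN iffD1, THEN conjunct2])
  then show "ceil_div n s \<le> c"
    by simp
qed

lemma ceil_div_0 [simp]: "ceil_div 0 s = 0"
  by (cases s) (simp_all add: ceil_div_def)

lemma ceil_div_Suc:
  assumes "0 < s"
  shows "ceil_div (Suc n) s = ceil_div n s + (if s dvd n then 1 else 0)"
proof (cases "s dvd n")
  case True
  then obtain c where "n = s * c"
    by blast
  with assms have "ceil_div n s = c" and "ceil_div (Suc n) s = c + 1"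
    by (auto intro!: ceil_div_unique)
  with True show ?thesis
    by simp
next
  case False
  then have "n \<noteq> s * ceil_div n s"
    by (metis dvd_triv_left)
  with ceil_div_bounds[OF assms, of n] have "ceil_div (Suc n) s = ceil_div n s"
    by (intro ceil_div_unique[OF assms]) auto
  with False show ?thesis
    by simp
qed

lemma ceiling_divide_eq_ceil_div:
  assumes "0 < s"
  shows "\<lceil>real n / real s\<rceil> = int (ceil_div n s)"
proof (rule ceiling_unique)
  have "real n \<le> real s * real (ceil_div n s)"
    and "real s * real (ceil_div n s) < real n + real s"
    using ceil_div_bounds[OF assms, of n]
    by (simp_all only: of_nat_mult [symmetric] of_nat_add [symmetric] of_nat_le_iff of_nat_less_iff)
  with assms show "real n / real s \<le> real_of_int (int (ceil_div n s))"
    and "real_of_int (int (ceil_div n s)) - 1 < real n / real s"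
    by (simp_all add: field_simps)
qed

lemma sum_power_ceil_div:
  fixes X :: "'a :: comm_ring_1"
  assumes "0 < s"
  shows "(X ^ d - 1) * (\<Sum>n<Suc N. X ^ (e * ceil_div n s + n * d))
    = X ^ (e * ceil_div N s + Suc N * d) - 1
      - X ^ d * (X ^ e - 1) * (\<Sum>k<ceil_div N s. X ^ ((e + s * d) * k))"
proof (induction N)
  case 0
  then show ?case
    by simp
next
  case (Suc N)
  define c where "c = ceil_div N s"
  define G where "G = (\<Sum>k<c. X ^ ((e + s * d) * k))"
  define B where "B = X ^ (e * c + N * d)"
  have "(X ^ d - 1) * (\<Sum>n<Suc (Suc N). X ^ (e * ceil_div n s + n * d))
      = (X ^ d - 1) * (\<Sum>n<Suc N. X ^ (e * ceil_div n s + n * d))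
        + (X ^ d - 1) * X ^ (e * ceil_div (Suc N) s + Suc N * d)"
    by (simp add: distrib_left)
  also have "(X ^ d - 1) * (\<Sum>n<Suc N. X ^ (e * ceil_div n s + n * d))
      = B * X ^ d - 1 - X ^ d * (X ^ e - 1) * G"
    using Suc.IH by (simp add: c_def G_def B_def power_add mult_ac)
  finally have step: "(X ^ d - 1) * (\<Sum>n<Suc (Suc N). X ^ (e * ceil_div n s + n * d))
      = B * X ^ d - 1 - X ^ d * (X ^ e - 1) * G
        + (X ^ d - 1) * X ^ (e * ceil_div (Suc N) s + Suc N * d)" .
  show ?case
  proof (cases "s dvd N")
    case True
    then have "N = s * c"
      using ceil_div_bounds[OF assms, of N] unfolding c_def
      by (metis ceil_div_unique[OF assms] dvd_def le_refl less_add_same_cancel1 assms)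
    then have "(\<Sum>k<c + 1. X ^ ((e + s * d) * k)) = G + B"
      by (simp add: G_def B_def algebra_simps)
    moreover have "ceil_div (Suc N) s = c + 1"
      using True by (simp add: ceil_div_Suc[OF assms] c_def)
    moreover have "X ^ (e * (c + 1) + Suc N * d) = B * X ^ d * X ^ e"
      and "X ^ (e * (c + 1) + Suc (Suc N) * d) = B * X ^ d * X ^ d * X ^ e"
      by (simp_all add: B_def power_add mult_ac)
    ultimately show ?thesis
      unfolding step by (simp add: algebra_simps)
  next
    case False
    then have "ceil_div (Suc N) s = c"
      by (simp add: ceil_div_Suc[OF assms] c_def)
    moreover have "X ^ (e * c + Suc N * d) = B * X ^ d"
      and "X ^ (e * c + Suc (Suc N) * d) = B * X ^ d * X ^ d"
      by (simp_all add: B_def power_add mult_ac)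
    ultimately show ?thesis
      unfolding step by (simp add: G_def algebra_simps)
  qed
qed

lemma sums_power_sum_exp:
  "(\<lambda>m. complex_of_real (\<Sum>n\<in>A. real n ^ m) * z ^ m / fact m) sums (\<Sum>n\<in>A. exp (of_nat n * z))"
proof -
  have "(\<lambda>m. (of_nat n * z) ^ m /\<^sub>R fact m) sums exp (of_nat n * z)" for n
    by (rule exp_converges)
  then have "(\<lambda>m. \<Sum>n\<in>A. (of_nat n * z) ^ m /\<^sub>R fact m) sums (\<Sum>n\<in>A. exp (of_nat n * z))"
    by (rule sums_sum)
  moreover have "(\<Sum>n\<in>A. (of_nat n * z) ^ m /\<^sub>R fact m) = complex_of_real (\<Sum>n\<in>A. real n ^ m) * z ^ m / fact m"
    for m
    by (simp add: scaleR_conv_of_real power_mult_distrib sum_distrib_left divide_inverse mult_ac)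
  ultimately show ?thesis
    by simp
qed

locale arith_seq_semigroup =
  fixes a d h s :: nat
  assumes a_pos: "0 < a" and coprime_a_d: "coprime a d" and s_pos: "0 < s"
begin

definition generated :: "nat set" where
  "generated = {m. \<exists>(x0::nat) (x::nat \<Rightarrow> nat). m = a * x0 + (\<Sum>i=1..s. (h * a + i * d) * x i)}"

definition apery :: "nat \<Rightarrow> nat" where
  "apery n = h * a * ceil_div n s + n * d"

definition residue :: "nat \<Rightarrow> nat" where
  "residue n = n * d mod a"

lemma residue_less: "residue n < a"
  using a_pos by (simp add: residue_def)

lemma inj_on_residue: "inj_on residue {..<a}"
proof (rule linorder_inj_onI')
  fix n n' assume "n \<in> {..<a}" "n' \<in> {..<a}" "n < n'"
  show "residue n \<noteq> residue n'"
  proof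
    assume "residue n = residue n'"
    then have "n' * d mod a = n * d mod a"
      by (simp add: residue_def)
    moreover have "n * d \<le> n' * d"
      using \<open>n < n'\<close> by simp
    ultimately have "a dvd n' * d - n * d"
      by (simp add: mod_eq_dvd_iff_nat)
    then have "a dvd n' - n"
      using coprime_a_d by (simp add: coprime_dvd_mult_left_iff flip: diff_mult_distrib)
    with \<open>n < n'\<close> \<open>n' \<in> {..<a}\<close> show False
      by (auto dest: dvd_imp_le)
  qed
qed

lemma bij_betw_residue: "bij_betw residue {..<a} {..<a}"
  using inj_on_residue residue_less by (intro bij_betw_imageI endo_inj_surj) auto

lemma apery_mod: "apery n mod a = residue n"
proof -
  have "apery n = n * d + (h * ceil_div n s) * a"
    by (simp add: apery_def algebra_simps)
  then show ?thesis
    by (simp add: residue_def)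
qed

lemma apery_eq: "apery n = residue n + a * (apery n div a)"
  by (simp flip: apery_mod)

lemma generated_add_multiple:
  assumes "m \<in> generated"
  shows "m + a * k \<in> generated"
proof -
  obtain x0 x where "m = a * x0 + (\<Sum>i=1..s. (h * a + i * d) * x i)"
    using assms by (auto simp: generated_def)
  then have "m + a * k = a * (x0 + k) + (\<Sum>i=1..s. (h * a + i * d) * x i)"
    by (simp add: algebra_simps)
  then show ?thesis
    by (auto simp: generated_def)
qed

lemma apery_in_generated: "apery n \<in> generated"
proof (cases "n = 0")
  case True
  then show ?thesis
    by (auto simp: generated_def apery_def intro!: exI[of _ 0] exI[of _ "\<lambda>_. 0"])
next
  case False
  have "n \<le> s * ceil_div n s" and "s * ceil_div n s < n + s"
    using ceil_div_bounds[OF s_pos] by simp_all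
  with False obtain k where k: "ceil_div n s = Suc k"
    by (cases "ceil_div n s") auto
  define t where "t = n - s * k"
  from \<open>n \<le> s * ceil_div n s\<close> \<open>s * ceil_div n s < n + s\<close> have "1 \<le> t" "t \<le> s" "n = s * k + t"
    unfolding k t_def by simp_all
  define x where "x i = (if i = s then k else 0) + (if i = t then 1 else 0)" for i
  have "(h * a + i * d) * x i
      = (if i = s then (h * a + i * d) * k else 0) + (if i = t then h * a + i * d else 0)" for i
    by (simp add: x_def distrib_left)
  then have "(\<Sum>i=1..s. (h * a + i * d) * x i) = (h * a + s * d) * k + (h * a + t * d)"
    using s_pos \<open>1 \<le> t\<close> \<open>t \<le> s\<close> by (simp add: sum.distrib)
  also have "\<dots> = apery n"
    unfolding apery_def k by (simp add: \<open>n = s * k + t\<close> algebra_simps)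
  finally show ?thesis
    unfolding generated_def by (intro CollectI exI[of _ 0] exI[of _ x]) simp
qed

lemma apery_le_of_generated:
  assumes "m \<in> generated"
  shows "\<exists>n<a. residue n = m mod a \<and> apery n \<le> m"
proof -
  obtain x0 x where m: "m = a * x0 + (\<Sum>i=1..s. (h * a + i * d) * x i)"
    using assms by (auto simp: generated_def)
  define X where "X = (\<Sum>i=1..s. x i)"
  define Y where "Y = (\<Sum>i=1..s. i * x i)"
  have m_eq: "m = a * x0 + h * a * X + Y * d"
    unfolding m X_def Y_def by (simp add: algebra_simps sum.distrib sum_distrib_left sum_distrib_right)
  have "Y \<le> s * X"
    unfolding X_def Y_def sum_distrib_left by (intro sum_mono) simp
  define n where "n = Y mod a"
  have "n \<le> Y"
    by (simp add: n_def)
  with \<open>Y \<le> s * X\<close> have "ceil_div n s \<le> X"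
    by (simp add: ceil_div_le_iff[OF s_pos])
  with \<open>n \<le> Y\<close> have "apery n \<le> m"
    unfolding apery_def m_eq by (intro trans_le_add2 add_mono mult_le_mono) simp_all
  moreover have "residue n = m mod a"
  proof -
    have "m = Y * d + (x0 + h * X) * a"
      unfolding m_eq by (simp add: algebra_simps)
    then show ?thesis
      by (simp add: residue_def n_def mod_mult_left_eq)
  qed
  moreover have "n < a"
    using a_pos by (simp add: n_def)
  ultimately show ?thesis
    by blast
qed

lemma generated_iff_apery_le:
  assumes "n < a" and "residue n = m mod a"
  shows "m \<in> generated \<longleftrightarrow> apery n \<le> m"
proof
  assume "m \<in> generated"
  then obtain n' where "n' < a" "residue n' = m mod a" "apery n' \<le> m"
    using apery_le_of_generated by blast
  with assms have "n' = n"
    using inj_onD[OF inj_on_residue, of n' n] by simp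
  with \<open>apery n' \<le> m\<close> show "apery n \<le> m"
    by simp
next
  assume "apery n \<le> m"
  moreover have "m mod a = apery n mod a"
    using assms by (simp add: apery_mod)
  ultimately obtain k where "m = apery n + a * k"
    by (metis le_add_diff_inverse mod_eq_dvd_iff_nat dvd_def)
  then show "m \<in> generated"
    using generated_add_multiple[OF apery_in_generated] by simp
qed

lemma residue_add_mult_in_generated_iff:
  assumes "n < a"
  shows "residue n + a * j \<in> generated \<longleftrightarrow> apery n div a \<le> j"
proof -
  have "residue n + a * j \<in> generated \<longleftrightarrow> residue n + a * (apery n div a) \<le> residue n + a * j"
    using assms residue_less by (subst apery_eq[symmetric]) (simp add: generated_iff_apery_le)
  also have "\<dots> \<longleftrightarrow> apery n div a \<le> j"
    using a_pos by simp
  finally show ?thesis .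
qed

lemma bij_betw_gaps:
  "bij_betw (\<lambda>(n, j). residue n + a * j) (SIGMA n:{..<a}. {..<apery n div a}) (- generated)"
proof (rule bij_betw_imageI)
  show "inj_on (\<lambda>(n, j). residue n + a * j) (SIGMA n:{..<a}. {..<apery n div a})"
  proof (rule inj_onI)
    fix u v
    assume "u \<in> (SIGMA n:{..<a}. {..<apery n div a})" "v \<in> (SIGMA n:{..<a}. {..<apery n div a})"
      and "(\<lambda>(n, j). residue n + a * j) u = (\<lambda>(n, j). residue n + a * j) v"
    then obtain n j n' j' where uv: "u = (n, j)" "v = (n', j')" and "n < a" "n' < a"
      and eq: "residue n + a * j = residue n' + a * j'"
      by (cases u; cases v) auto
    have "residue n = residue n'"
      using arg_cong[where f = "\<lambda>m. m mod a", OF eq] residue_less by simp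
    then have "n = n'"
      using inj_onD[OF inj_on_residue] \<open>n < a\<close> \<open>n' < a\<close> by simp
    with eq a_pos uv show "u = v"
      by simp
  qed
  show "(\<lambda>(n, j). residue n + a * j) ` (SIGMA n:{..<a}. {..<apery n div a}) = - generated"
  proof (intro equalityI subsetI)
    fix m assume "m \<in> (\<lambda>(n, j). residue n + a * j) ` (SIGMA n:{..<a}. {..<apery n div a})"
    then show "m \<in> - generated"
      by (auto simp: residue_add_mult_in_generated_iff)
  next
    fix m assume "m \<in> - generated"
    have "m mod a \<in> residue ` {..<a}"
      using bij_betw_residue a_pos by (simp add: bij_betw_def)
    then obtain n where "n < a" "residue n = m mod a"
      by auto
    moreover have "m = residue n + a * (m div a)"
      using \<open>residue n = m mod a\<close> by simp
    ultimately show "m \<in> (\<lambda>(n, j). residue n + a * j) ` (SIGMA n:{..<a}. {..<apery n div a})"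
      using \<open>m \<in> - generated\<close> residue_add_mult_in_generated_iff[of n "m div a"]
      by (intro image_eqI[of _ _ "(n, m div a)"]) auto
  qed
qed

lemma sum_gaps:
  "(\<Sum>m\<in>- generated. f m) = (\<Sum>n<a. \<Sum>j<apery n div a. f (residue n + a * j))"
  by (simp add: sum.reindex_bij_betw[OF bij_betw_gaps, symmetric] sum.Sigma split_def)

lemma real_apery_div:
  "real (apery n) / real a = real h * of_int \<lceil>real n / real s\<rceil> + real n * real d / real a"
  using a_pos by (simp add: apery_def ceiling_divide_eq_ceil_div[OF s_pos] field_simps)

lemma power_sum_gaps_eq_bernpoly:
  "real (Suc m) * (\<Sum>x\<in>- generated. real x ^ m)
    = real a ^ m * (\<Sum>n<a. bernpoly (Suc m) (real (apery n) / real a)) - bernoulli (Suc m)"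
proof -
  have row: "real (Suc m) * (\<Sum>j<apery n div a. real (residue n + a * j) ^ m)
      = real a ^ m * (bernpoly (Suc m) (real (apery n) / real a) - bernpoly (Suc m) (real (residue n) / real a))"
    for n
  proof -
    define y where "y = real (residue n) / real a"
    have "real (residue n + a * j) = real a * (y + real j)" for j
      using a_pos by (simp add: y_def field_simps)
    then have "real (Suc m) * (\<Sum>j<apery n div a. real (residue n + a * j) ^ m)
        = real a ^ m * (real (Suc m) * (\<Sum>j<apery n div a. (y + real j) ^ m))"
      by (simp add: power_mult_distrib sum_distrib_left mult_ac)
    also have "y + real (apery n div a) = real (apery n) / real a"
      using a_pos arg_cong[where f = real, OF apery_eq[of n]] by (simp add: y_def field_simps)
    then have "real (Suc m) * (\<Sum>j<apery n div a. (y + real j) ^ m)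
        = bernpoly (Suc m) (real (apery n) / real a) - bernpoly (Suc m) y"
      using sum_power_eq_bernpoly[where x = y and q = "apery n div a" and m = m] by simp
    finally show ?thesis
      by (simp add: y_def)
  qed
  have "real (Suc m) * (\<Sum>x\<in>- generated. real x ^ m)
      = (\<Sum>n<a. real a ^ m * (bernpoly (Suc m) (real (apery n) / real a)
          - bernpoly (Suc m) (real (residue n) / real a)))"
    by (simp add: sum_gaps sum_distrib_left flip: row)
  also have "\<dots> = real a ^ m * (\<Sum>n<a. bernpoly (Suc m) (real (apery n) / real a))
      - real a ^ m * (\<Sum>n<a. bernpoly (Suc m) (real (residue n) / real a))"
    by (simp add: sum_subtractf right_diff_distrib sum_distrib_left)
  also have "(\<Sum>n<a. bernpoly (Suc m) (real (residue n) / real a)) = (\<Sum>r<a. bernpoly (Suc m) (real r / real a))"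
    by (rule sum.reindex_bij_betw[OF bij_betw_residue])
  also have "real a ^ m * \<dots> = bernoulli (Suc m)"
    using bernpoly_multiplication[OF a_pos, of "Suc m"] a_pos by (simp add: mult.assoc)
  finally show ?thesis .
qed

lemma geometric_sum_gaps:
  fixes X :: "'a :: comm_ring_1"
  shows "(X ^ a - 1) * (\<Sum>m\<in>- generated. X ^ m) = (\<Sum>n<a. X ^ apery n) - (\<Sum>r<a. X ^ r)"
proof -
  have row: "(X ^ a - 1) * (\<Sum>j<apery n div a. X ^ (residue n + a * j)) = X ^ apery n - X ^ residue n" for n
  proof -
    have "(\<Sum>j<apery n div a. X ^ (residue n + a * j)) = X ^ residue n * (\<Sum>j<apery n div a. (X ^ a) ^ j)"
      by (simp add: power_add power_mult sum_distrib_left)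
    moreover have "(X ^ a - 1) * (\<Sum>j<apery n div a. (X ^ a) ^ j) = (X ^ a) ^ (apery n div a) - 1"
      by (simp add: power_diff_1_eq)
    moreover have "X ^ apery n = X ^ residue n * (X ^ a) ^ (apery n div a)"
      by (subst apery_eq) (simp add: power_add power_mult)
    ultimately show ?thesis
      by (simp add: right_diff_distrib mult.left_commute[of "X ^ a - 1"])
  qed
  have "(X ^ a - 1) * (\<Sum>m\<in>- generated. X ^ m) = (\<Sum>n<a. X ^ apery n - X ^ residue n)"
    by (simp add: sum_gaps sum_distrib_left flip: row)
  also have "\<dots> = (\<Sum>n<a. X ^ apery n) - (\<Sum>r<a. X ^ r)"
    by (simp add: sum_subtractf sum.reindex_bij_betw[OF bij_betw_residue])
  finally show ?thesis .
qed

lemma geometric_sum_apery: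
  fixes X :: "'a :: comm_ring_1"
  shows "(X ^ d - 1) * (\<Sum>n<a. X ^ apery n)
    = X ^ ((h * ceil_div (a - 1) s + d) * a) - 1
      - X ^ d * (X ^ (a * h) - 1) * (\<Sum>k<ceil_div (a - 1) s. X ^ ((h * a + s * d) * k))"
proof -
  have "(X ^ d - 1) * (\<Sum>n<a. X ^ apery n) = X ^ (h * a * ceil_div (a - 1) s + a * d) - 1
      - X ^ d * (X ^ (h * a) - 1) * (\<Sum>k<ceil_div (a - 1) s. X ^ ((h * a + s * d) * k))"
    using sum_power_ceil_div[OF s_pos, of X d "h * a" "a - 1"] a_pos by (simp add: apery_def)
  then show ?thesis
    by (simp add: algebra_simps)
qed

lemma sum_power_gaps_eq:
  fixes X :: "'a :: field"
  assumes "X \<noteq> 0" "X \<noteq> 1" "X ^ d \<noteq> 1" "X ^ a \<noteq> 1" "X ^ (h * a + s * d) \<noteq> 1"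
  shows "(\<Sum>m\<in>- generated. X ^ m)
    = (X ^ ((h * ceil_div (a - 1) s + d) * a) - 1) / ((X ^ d - 1) * (X ^ a - 1))
      + (X ^ (a * h) - 1) * (X ^ (ceil_div (a - 1) s * (h * a + s * d)) - 1)
        / ((X ^ a - 1) * (X ^ (h * a + s * d) - 1) * (inverse (X ^ d) - 1))
      - 1 / (X - 1)"
proof -
  define K where "K = ceil_div (a - 1) s"
  define P where "P = h * a + s * d"
  define G where "G = (\<Sum>k<K. X ^ (P * k))"
  define Ea E1 Ed EP Emd where "Ea = X ^ a - 1" and "E1 = X - 1" and "Ed = X ^ d - 1"
    and "EP = X ^ P - 1" and "Emd = inverse (X ^ d) - 1"
  have nonzero: "Ea \<noteq> 0" "E1 \<noteq> 0" "Ed \<noteq> 0" "EP \<noteq> 0" "Emd \<noteq> 0"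
    using assms by (simp_all add: Ea_def E1_def Ed_def EP_def Emd_def P_def)
  have residues_sum: "(X - 1) * (\<Sum>r<a. X ^ r) = X ^ a - 1"
    by (simp add: power_diff_1_eq)
  have "(X ^ P - 1) * G = (X ^ P) ^ K - 1"
    by (simp add: G_def power_diff_1_eq power_mult)
  also have "(X ^ P) ^ K = X ^ (K * P)"
    by (subst mult.commute) (rule power_mult[symmetric])
  finally have generators_sum: "(X ^ P - 1) * G = X ^ (K * P) - 1" .
  have gaps: "(\<Sum>m\<in>- generated. X ^ m) = ((\<Sum>n<a. X ^ apery n) - (\<Sum>r<a. X ^ r)) / Ea"
    and residues: "(\<Sum>r<a. X ^ r) = Ea / E1"
    and aperys: "(\<Sum>n<a. X ^ apery n) = (X ^ ((h * K + d) * a) - 1 - X ^ d * (X ^ (a * h) - 1) * G) / Ed"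
    and generators: "G = (X ^ (K * P) - 1) / EP"
    using geometric_sum_gaps[of X] geometric_sum_apery[of X] residues_sum generators_sum nonzero
    unfolding K_def[symmetric] P_def[symmetric] G_def[symmetric] Ea_def E1_def Ed_def EP_def
    by (simp_all add: field_simps)
  have power_d: "X ^ d = - Ed / Emd"
    using assms by (simp add: Ed_def Emd_def field_simps)
  show ?thesis
    unfolding K_def[symmetric] P_def[symmetric] Ea_def[symmetric] E1_def[symmetric] Ed_def[symmetric]
      EP_def[symmetric] Emd_def[symmetric]
    unfolding gaps residues aperys generators power_d
    using nonzero by (simp add: field_simps)
qed

lemma sum_exp_gaps_eq:
  fixes z :: complex
  assumes "exp z \<noteq> 1" "exp (of_nat d * z) \<noteq> 1" "exp (of_nat a * z) \<noteq> 1"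
    and "exp (of_nat (h * a + s * d) * z) \<noteq> 1"
  shows "(\<Sum>m\<in>- generated. exp (of_nat m * z)) =
              (exp ((of_nat h * of_int \<lceil>real (a - 1) / real s\<rceil> + of_nat d) * of_nat a * z) - 1)
                 / ((exp (of_nat d * z) - 1) * (exp (of_nat a * z) - 1))
               + ((exp (of_nat a * of_nat h * z) - 1)
                   * (exp (of_int \<lceil>real (a - 1) / real s\<rceil> * (of_nat h * of_nat a + of_nat s * of_nat d) * z) - 1))
                 / ((exp (of_nat a * z) - 1) * (exp ((of_nat h * of_nat a + of_nat s * of_nat d) * z) - 1)
                    * (exp (- (of_nat d * z)) - 1))
               - 1 / (exp z - 1)"
proof -
  define X where "X = exp z"
  define K where "K = ceil_div (a - 1) s"
  have exp_pow: "exp (of_nat k * z) = X ^ k" for k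
    unfolding X_def by (rule exp_of_nat_mult)
  have ceiling: "\<lceil>real (a - 1) / real s\<rceil> = int K"
    by (simp add: K_def ceiling_divide_eq_ceil_div[OF s_pos])
  have exps: "exp ((of_nat h * of_int \<lceil>real (a - 1) / real s\<rceil> + of_nat d) * of_nat a * z) = X ^ ((h * K + d) * a)"
    "exp (of_nat a * of_nat h * z) = X ^ (a * h)"
    "exp (of_int \<lceil>real (a - 1) / real s\<rceil> * (of_nat h * of_nat a + of_nat s * of_nat d) * z)
      = X ^ (K * (h * a + s * d))"
    "exp ((of_nat h * of_nat a + of_nat s * of_nat d) * z) = X ^ (h * a + s * d)"
    "exp (- (of_nat d * z)) = inverse (X ^ d)"
    unfolding ceiling by (simp_all add: exp_minus flip: exp_pow)
  have "X \<noteq> 0" "X \<noteq> 1"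
    using assms(1) by (simp_all add: X_def)
  moreover have "X ^ d \<noteq> 1" "X ^ a \<noteq> 1" "X ^ (h * a + s * d) \<noteq> 1"
    using assms(2-4) by (metis exp_pow)+
  ultimately show ?thesis
    unfolding exps exp_pow X_def[symmetric] by (rule sum_power_gaps_eq[folded K_def])
qed

end

theorem mainTheorem7:
  fixes a d h s :: nat
  assumes "a \<ge> 2" and "d \<ge> 1" and "h \<ge> 1"
    and "gcd a d = 1" and "1 \<le> s" and "s < a"
  defines "NR \<equiv> {n::nat. n > 0 \<and>
              \<not> (\<exists>(x0::nat) (x::nat \<Rightarrow> nat). n = a * x0 + (\<Sum>i=1..s. (h * a + i * d) * x i))}"
  defines "S \<equiv> (\<lambda>m::nat. \<Sum>n\<in>NR. (real n) ^ m)"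
  shows "(\<forall>m::nat. m \<ge> 1 \<longrightarrow>
            real m * S (m - 1) =
              real a ^ (m - 1) *
                (\<Sum>n=0..a-1. bernpoly m (real h * of_int \<lceil>real n / real s\<rceil> + real n * real d / real a))
              - bernoulli m)
       \<and> (\<forall>z::complex.
            exp (of_nat d * z) - 1 \<noteq> 0 \<and> exp (of_nat a * z) - 1 \<noteq> 0 \<and>
            exp (of_nat (h * a + s * d) * z) - 1 \<noteq> 0 \<and> exp (- (of_nat d * z)) - 1 \<noteq> 0 \<and>
            exp z - 1 \<noteq> 0 \<longrightarrow>
            (\<lambda>m. complex_of_real (S m) * z ^ m / fact m) sums
              ((exp ((of_nat h * of_int \<lceil>real (a - 1) / real s\<rceil> + of_nat d) * of_nat a * z) - 1)
                 / ((exp (of_nat d * z) - 1) * (exp (of_nat a * z) - 1))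
               + ((exp (of_nat a * of_nat h * z) - 1)
                   * (exp (of_int \<lceil>real (a - 1) / real s\<rceil> * (of_nat h * of_nat a + of_nat s * of_nat d) * z) - 1))
                 / ((exp (of_nat a * z) - 1) * (exp ((of_nat h * of_nat a + of_nat s * of_nat d) * z) - 1)
                    * (exp (- (of_nat d * z)) - 1))
               - 1 / (exp z - 1)))"
proof -
  interpret arith_seq_semigroup a d h s
    using assms(1,4,5) by unfold_locales (simp_all add: coprime_iff_gcd_eq_1)
  have "0 \<in> generated"
    using apery_in_generated[of 0] by (simp add: apery_def)
  have "NR = {n. 0 < n} \<inter> - generated"
    unfolding NR_def generated_def by auto
  with \<open>0 \<in> generated\<close> have NR: "NR = - generated"
    by auto
  have interval: "{0..a - 1} = {..<a}"
    using assms(1) by auto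
  show ?thesis
    apply (intro conjI allI impI)
    subgoal premises prems for m
    proof -
      obtain k where "m = Suc k"
        using prems not0_implies_Suc by force
      then show ?thesis
        unfolding S_def NR interval by (simp only: diff_Suc_1 power_sum_gaps_eq_bernpoly real_apery_div)
    qed
    subgoal for z
      using sums_power_sum_exp[of "- generated" z] unfolding S_def NR by (simp add: sum_exp_gaps_eq)
    done
qed

end
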